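(* Assume $\sigma_1(x)=\tfrac12\sigma_1''(0)(x-a_1)(x-b_1)$ with $\sigma_1''(0)\ne0$ and real $a_1<0<b_1$, and that $(1-q^{-1})\tau'(0)=-\tfrac12\sigma_1''(0)$ and $(1-q^{-1})\tau(0)=\tfrac12\sigma_1''(0)(a_1+b_1)$, so that $\sigma_2(x)\equiv q\tfrac12\sigma_1''(0)a_1b_1$ is a nonzero constant. Put $a=a_1$, $b=b_1$ and $$\rho(x)=(qx/a,\,qx/b;q)_\infty.$$ Then there exist polynomials $P_n$, $n\in\mathbb{N}_0$, with $P_n$ of degree $n$ a solution of the q-EHT with $\lambda=\lambda_n$, and nonzero constants $d_n^2$, such that for all $m,n\in\mathbb{N}_0$ $$\int_a^bP_n(x)P_m(x)\rho(x)\,d_qx=d_n^2\delta_{mn},$$ i.e. orthogonality with respect to $\rho$ supported on $\{q^ka\}_{k\in\mathbb{N}_0}\cup\{q^kb\}_{k\in\mathbb{N}_0}$.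
   Context: Throughout $0<q<1$. For a function $y$ and $\zeta\in\{q,q^{-1}\}$, $D_\zeta y(x)=\frac{y(x)-y(\zeta x)}{(1-\zeta)x}$ for $x\ne0$ and $D_\zeta y(0)=y'(0)$; $[n]_q=\frac{1-q^n}{1-q}$. Let $\sigma_1$ be a real polynomial of degree at most two, $\tau(x)=\tau'(0)x+\tau(0)$ a real polynomial with $\tau'(0)\ne0$, and $\sigma_2(x):=q[\sigma_1(x)+(1-q^{-1})x\tau(x)]$. The q-EHT with parameter $n$ is $\sigma_1(x)D_{q^{-1}}D_qy(x)+\tau(x)D_qy(x)+\lambda_ny(x)=0$, $\lambda_n=-[n]_q\big(\tau'(0)+\tfrac12[n-1]_{q^{-1}}\sigma_1''(0)\big)$. $(\beta;q)_\infty=\prod_{k\ge0}(1-\beta q^k)$, $(\beta_1,\beta_2;q)_\infty=(\beta_1;q)_\infty(\beta_2;q)_\infty$. For $a<0<b$, $\int_a^b f(x)\,d_qx=(1-q)b\sum_{j\ge0}q^jf(q^jb)+(1-q)(-a)\sum_{j\ge0}q^jf(q^ja)$. *)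

theory Defs
  imports "HOL-Analysis.Analysis" "HOL-Computational_Algebra.Polynomial"
begin

definition qD :: "real \<Rightarrow> (real \<Rightarrow> real) \<Rightarrow> real \<Rightarrow> real" where
  "qD \<zeta> y x = (if x = 0 then deriv y 0 else (y x - y (\<zeta> * x)) / ((1 - \<zeta>) * x))"

definition qnum :: "real \<Rightarrow> int \<Rightarrow> real" where
  "qnum q n = (1 - q powi n) / (1 - q)"

definition qpoch_inf :: "real \<Rightarrow> real \<Rightarrow> real" where
  "qpoch_inf \<beta> q = (\<Prod>k. 1 - \<beta> * q ^ k)"

definition qint :: "real \<Rightarrow> real \<Rightarrow> real \<Rightarrow> (real \<Rightarrow> real) \<Rightarrow> real" where
  "qint q a b f = (1 - q) * b * (\<Sum>j. q ^ j * f (q ^ j * b))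
                 + (1 - q) * (- a) * (\<Sum>j. q ^ j * f (q ^ j * a))"

definition qEHT :: "real \<Rightarrow> (real \<Rightarrow> real) \<Rightarrow> (real \<Rightarrow> real) \<Rightarrow> real \<Rightarrow> (real \<Rightarrow> real) \<Rightarrow> bool" where
  "qEHT q \<sigma>1 \<tau> lm y \<longleftrightarrow>
     (\<forall>x. \<sigma>1 x * qD (1 / q) (qD q y) x + \<tau> x * qD q y x + lm * y x = 0)"

definition lam :: "real \<Rightarrow> real \<Rightarrow> real \<Rightarrow> nat \<Rightarrow> real" where
  "lam q t1 s n = - qnum q (int n) * (t1 + 1/2 * qnum (1 / q) (int n - 1) * s)"

end

theory Submission
  imports Defs
begin

text \<open>The operator \<open>L y = \<sigma>\<^sub>1 D\<^sub>q\<^sub>\<^sup>-\<^sub>\<^sup>1 D\<^sub>q y + \<tau> D\<^sub>q y\<close> acts on polynomials as an upper triangular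
  matrix with diagonal \<open>-\<lambda>\<^sub>m\<close>; these are affine in \<open>q\<^sup>-\<^sup>m\<close>, hence distinct, so \<open>L\<close> has a
  monic eigenpolynomial of every degree.  The weight satisfies the q-Pearson equation
  \<open>\<rho>(x/q) = (1 - x/a)(1 - x/b) \<rho>(x)\<close>, which turns \<open>x \<rho> (L f \<cdot> g - f \<cdot> L g)\<close> into a difference
  \<open>W(x) - W(x/q)\<close> of a weighted q-Wronskian.  Since \<open>\<rho>\<close> vanishes at \<open>a/q\<close> and \<open>b/q\<close>, the Jackson
  sums along both lattices \<open>q\<^sup>j a\<close> and \<open>q\<^sup>j b\<close> telescope to the same value \<open>W(0)\<close>, and the two halves
  of the q-integral cancel: \<open>L\<close> is symmetric, so eigenpolynomials with distinct eigenvalues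
  are orthogonal.  The norms are positive because \<open>\<rho> > 0\<close> on the lattices.\<close>

section \<open>Infinite q-Pochhammer products\<close>

lemma convergent_prod_qpoch:
  fixes q \<beta> :: real
  assumes "0 < q" "q < 1"
  shows "convergent_prod (\<lambda>k. 1 - \<beta> * q ^ k)"
proof -
  have "summable (\<lambda>k. norm ((1 - \<beta> * q ^ k) - 1))"
    using assms by (simp add: abs_mult power_abs summable_mult summable_geometric)
  then show ?thesis
    by (intro abs_convergent_prod_imp_convergent_prod summable_imp_abs_convergent_prod)
qed

lemma qpoch_inf_split:
  assumes "0 < q" "q < 1"
  shows "qpoch_inf \<beta> q = (\<Prod>k<N. 1 - \<beta> * q ^ k) * qpoch_inf (\<beta> * q ^ N) q"
proof -
  have "(\<lambda>k. 1 - \<beta> * q ^ k) has_prod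
          ((\<Prod>k<N. 1 - \<beta> * q ^ k) * (\<Prod>k. 1 - \<beta> * q ^ (k + N)))"
    by (rule has_prod_ignore_initial_segment'[OF convergent_prod_qpoch[OF assms]])
  then show ?thesis
    unfolding qpoch_inf_def by (simp add: has_prod_unique[symmetric] power_add mult_ac)
qed

lemma qpoch_inf_rec:
  assumes "0 < q" "q < 1"
  shows "qpoch_inf \<beta> q = (1 - \<beta>) * qpoch_inf (\<beta> * q) q"
  using qpoch_inf_split[OF assms, of \<beta> 1] by simp

lemma qpoch_inf_pos:
  assumes "0 < q" "q < 1" "\<beta> < 1"
  shows "0 < qpoch_inf \<beta> q"
proof -
  have "0 < 1 - \<beta> * q ^ k" for k
  proof (cases "\<beta> \<le> 0")
    case True
    then have "\<beta> * q ^ k \<le> 0" using assms by (simp add: mult_nonpos_nonneg)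
    then show ?thesis by simp
  next
    case False
    then have "\<beta> * q ^ k \<le> \<beta>" using assms by (simp add: mult_left_le power_le_one)
    then show ?thesis using assms by simp
  qed
  then show ?thesis
    unfolding qpoch_inf_def by (intro less_0_prodinf convergent_prod_qpoch assms) auto
qed

lemma qpoch_inf_zero [simp]: "qpoch_inf 0 q = 1"
  by (simp add: qpoch_inf_def)

text \<open>Once the factors of the tail are nonzero, the tail is the full product divided by a
  partial product, which converges to the full product.\<close>
lemma qpoch_inf_tail_tendsto:
  assumes "0 < q" "q < 1"
  shows "(\<lambda>N. qpoch_inf (\<beta> * q ^ N) q) \<longlonglongrightarrow> 1"
proof -
  have "0 < 1 / (\<bar>\<beta>\<bar> + 1)" by simp
  then obtain M where "q ^ M < 1 / (\<bar>\<beta>\<bar> + 1)"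
    using real_arch_pow_inv assms(2) by blast
  then have M: "\<bar>\<beta>\<bar> * q ^ M < 1"
    by (simp add: field_simps) (smt (verit) mult_left_mono zero_le_power assms(1) abs_ge_zero)
  define \<gamma> where "\<gamma> = \<beta> * q ^ M"
  have nz: "1 - \<gamma> * q ^ k \<noteq> 0" for k
  proof -
    have "\<bar>\<gamma> * q ^ k\<bar> \<le> \<bar>\<beta>\<bar> * q ^ M"
      using assms by (simp add: \<gamma>_def abs_mult mult_left_le power_le_one)
    then show ?thesis using M by auto
  qed
  have pos: "qpoch_inf \<gamma> q \<noteq> 0"
    unfolding qpoch_inf_def using nz by (intro prodinf_nonzero convergent_prod_qpoch assms) auto
  have "(\<lambda>N. \<Prod>k<N. 1 - \<gamma> * q ^ k) \<longlonglongrightarrow> qpoch_inf \<gamma> q"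
    unfolding LIMSEQ_lessThan_iff_atMost qpoch_inf_def
    by (rule convergent_prod_LIMSEQ[OF convergent_prod_qpoch[OF assms]])
  then have "(\<lambda>N. qpoch_inf \<gamma> q / (\<Prod>k<N. 1 - \<gamma> * q ^ k)) \<longlonglongrightarrow> qpoch_inf \<gamma> q / qpoch_inf \<gamma> q"
    by (intro tendsto_divide tendsto_const pos)
  moreover have "qpoch_inf \<gamma> q / (\<Prod>k<N. 1 - \<gamma> * q ^ k) = qpoch_inf (\<beta> * q ^ (N + M)) q" for N
    using qpoch_inf_split[OF assms, of \<gamma> N] nz by (simp add: \<gamma>_def power_add mult_ac)
  ultimately have "(\<lambda>N. qpoch_inf (\<beta> * q ^ (N + M)) q) \<longlonglongrightarrow> 1"
    using pos by simp
  then show ?thesis by (rule LIMSEQ_offset)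
qed

section \<open>q-Derivatives of polynomials and the q-EHT operator\<close>

lemma qnum_of_nat [simp]: "qnum z (int n) = (1 - z ^ n) / (1 - z)"
  by (simp add: qnum_def)

lemma qnum_Suc [simp]: "qnum z (1 + int n) = (1 - z ^ Suc n) / (1 - z)"
  using qnum_of_nat[of z "Suc n"] by simp

lemma qnum_0 [simp]: "qnum z 0 = 0"
  by (simp add: qnum_def)

lemma qnum_1 [simp]: "z \<noteq> 1 \<Longrightarrow> qnum z 1 = 1"
  by (simp add: qnum_def)

definition qdiff_poly :: "real \<Rightarrow> real poly \<Rightarrow> real poly" where
  "qdiff_poly z p = Abs_poly (\<lambda>k. qnum z (int (Suc k)) * coeff p (Suc k))"

lemma coeff_qdiff_poly: "coeff (qdiff_poly z p) k = qnum z (int (Suc k)) * coeff p (Suc k)"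
  unfolding qdiff_poly_def by (subst coeff_Abs_poly[of "degree p"]) (auto simp: coeff_eq_0)

lemma degree_qdiff_poly_le: "degree (qdiff_poly z p) \<le> degree p"
  by (rule degree_le) (simp add: coeff_qdiff_poly coeff_eq_0)

lemma poly_as_sum_atMost:
  fixes p :: "'a::comm_semiring_1 poly"
  assumes "degree p \<le> N"
  shows "poly p x = (\<Sum>i\<le>N. coeff p i * x ^ i)"
  using assms by (subst poly_altdef, intro sum.mono_neutral_left) (auto simp: coeff_eq_0)

lemma poly_qdiff_poly:
  assumes "z \<noteq> 1" "x \<noteq> 0"
  shows "poly (qdiff_poly z p) x = (poly p x - poly p (z * x)) / ((1 - z) * x)"
proof -
  define N where "N = degree p"
  have "(1 - z) * x * poly (qdiff_poly z p) x
          = (\<Sum>k\<le>N. coeff p (Suc k) * (x ^ Suc k - (z * x) ^ Suc k))"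
    unfolding poly_as_sum_atMost[OF degree_qdiff_poly_le[of z p, folded N_def]] sum_distrib_left
    using assms by (intro sum.cong) (simp_all add: coeff_qdiff_poly field_simps power_mult_distrib)
  also have "\<dots> = (\<Sum>i\<le>Suc N. coeff p i * (x ^ i - (z * x) ^ i))"
    unfolding sum.atMost_Suc_shift by simp
  also have "\<dots> = poly p x - poly p (z * x)"
    using poly_as_sum_atMost[of p "Suc N"] by (simp add: N_def sum_subtractf algebra_simps)
  finally show ?thesis using assms by (simp add: field_simps)
qed

lemma qD_poly:
  assumes "z \<noteq> 1"
  shows "qD z (poly p) = poly (qdiff_poly z p)"
proof
  fix x
  show "qD z (poly p) x = poly (qdiff_poly z p) x"
  proof (cases "x = 0")
    case True
    have "deriv (poly p) 0 = poly (pderiv p) 0"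
      by (rule DERIV_imp_deriv) (rule poly_DERIV)
    then show ?thesis
      using True assms by (simp add: qD_def poly_0_coeff_0 coeff_pderiv coeff_qdiff_poly)
  next
    case False
    then show ?thesis using assms by (simp add: qD_def poly_qdiff_poly)
  qed
qed

definition qEHT_op :: "real \<Rightarrow> real poly \<Rightarrow> real poly \<Rightarrow> real poly \<Rightarrow> real poly" where
  "qEHT_op q \<sigma> \<tau> p = \<sigma> * qdiff_poly (1 / q) (qdiff_poly q p) + \<tau> * qdiff_poly q p"

lemma qEHT_of_qEHT_op_eigen:
  assumes "q \<noteq> 1" "qEHT_op q \<sigma> \<tau> p = smult (- lm) p"
  shows "qEHT q (poly \<sigma>) (poly \<tau>) lm (poly p)"
proof -
  have "1 / q \<noteq> 1" using assms(1) by auto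
  have "poly (qEHT_op q \<sigma> \<tau> p) x = - lm * poly p x" for x
    using assms(2) by simp
  then show ?thesis
    unfolding qEHT_def qD_poly[OF assms(1)] qD_poly[OF \<open>1 / q \<noteq> 1\<close>]
    by (simp add: qEHT_op_def)
qed

definition qEHT_coeff :: "real \<Rightarrow> real \<Rightarrow> real \<Rightarrow> nat \<Rightarrow> real" where
  "qEHT_coeff q u v m = qnum q (int m) * (u * qnum (1 / q) (int m - 1) + v)"

lemma coeff_qEHT_op:
  "coeff (qEHT_op q [:\<sigma>0, \<sigma>1, \<sigma>2:] [:\<tau>0, \<tau>1:] p) k
     = qEHT_coeff q \<sigma>2 \<tau>1 k * coeff p k + qEHT_coeff q \<sigma>1 \<tau>0 (Suc k) * coeff p (Suc k)
       + qEHT_coeff q \<sigma>0 0 (Suc (Suc k)) * coeff p (Suc (Suc k))"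
proof (cases k)
  case 0
  then show ?thesis
    by (simp add: qEHT_op_def coeff_qdiff_poly qEHT_coeff_def algebra_simps)
next
  case (Suc j)
  then show ?thesis
    by (cases j) (simp_all add: qEHT_op_def coeff_qdiff_poly qEHT_coeff_def algebra_simps)
qed

text \<open>Coefficients of an eigenvector, of eigenvalue \<open>d n\<close>, of an upper triangular operator with
  diagonal \<open>d\<close> and two superdiagonals \<open>e\<close>, \<open>f\<close>, solved from the top coefficient downwards.\<close>
function triangular_eigen_coeff ::
    "(nat \<Rightarrow> real) \<Rightarrow> (nat \<Rightarrow> real) \<Rightarrow> (nat \<Rightarrow> real) \<Rightarrow> nat \<Rightarrow> nat \<Rightarrow> real" where
  "triangular_eigen_coeff d e f n k =
     (if n < k then 0 else if k = n then 1 else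
        (e (Suc k) * triangular_eigen_coeff d e f n (Suc k)
         + f (Suc (Suc k)) * triangular_eigen_coeff d e f n (Suc (Suc k))) / (d n - d k))"
  by auto
termination by (relation "Wellfounded.measure (\<lambda>(_, _, _, n, k). n - k)") auto

declare triangular_eigen_coeff.simps [simp del]

lemma triangular_eigenpoly_exists:
  fixes d e f :: "nat \<Rightarrow> real"
  assumes "\<And>k. k < n \<Longrightarrow> d k \<noteq> d n"
  shows "\<exists>P. degree P = n \<and> lead_coeff P = 1 \<and>
           (\<forall>k. d k * coeff P k + e (Suc k) * coeff P (Suc k) + f (Suc (Suc k)) * coeff P (Suc (Suc k))
                  = d n * coeff P k)"
proof -
  define c where "c = triangular_eigen_coeff d e f n"
  have c_gt: "c k = 0" if "n < k" for k
    using that by (subst c_def, subst triangular_eigen_coeff.simps) simp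
  have c_top: "c n = 1"
    by (subst c_def, subst triangular_eigen_coeff.simps) simp
  have c_lt: "c k = (e (Suc k) * c (Suc k) + f (Suc (Suc k)) * c (Suc (Suc k))) / (d n - d k)"
    if "k < n" for k
    using that by (subst c_def, subst triangular_eigen_coeff.simps) (simp add: c_def)
  define P where "P = Abs_poly c"
  have coeff_P: "coeff P = c"
    unfolding P_def by (rule coeff_Abs_poly[of n]) (rule c_gt)
  have "degree P = n"
    by (intro antisym degree_le le_degree) (simp_all add: coeff_P c_gt c_top)
  moreover from this have "lead_coeff P = 1"
    by (simp add: coeff_P c_top)
  moreover have "d k * c k + e (Suc k) * c (Suc k) + f (Suc (Suc k)) * c (Suc (Suc k)) = d n * c k" for k
  proof (cases "k < n")
    case True
    then have "d n - d k \<noteq> 0" using assms by fastforce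
    then show ?thesis unfolding c_lt[OF True] by (simp add: field_simps)
  next
    case False
    then show ?thesis by (cases "k = n") (simp_all add: c_gt c_top)
  qed
  ultimately show ?thesis using coeff_P by blast
qed

lemma qEHT_op_eigenpoly_exists:
  assumes "\<And>k. k < n \<Longrightarrow> qEHT_coeff q \<sigma>2 \<tau>1 k \<noteq> qEHT_coeff q \<sigma>2 \<tau>1 n"
  shows "\<exists>P. degree P = n \<and> lead_coeff P = 1 \<and>
           qEHT_op q [:\<sigma>0, \<sigma>1, \<sigma>2:] [:\<tau>0, \<tau>1:] P = smult (qEHT_coeff q \<sigma>2 \<tau>1 n) P"
proof -
  obtain P where "degree P = n" "lead_coeff P = 1"
    and eigen: "\<And>k. qEHT_coeff q \<sigma>2 \<tau>1 k * coeff P k + qEHT_coeff q \<sigma>1 \<tau>0 (Suc k) * coeff P (Suc k)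
                       + qEHT_coeff q \<sigma>0 0 (Suc (Suc k)) * coeff P (Suc (Suc k))
                     = qEHT_coeff q \<sigma>2 \<tau>1 n * coeff P k"
    using triangular_eigenpoly_exists[of n "qEHT_coeff q \<sigma>2 \<tau>1" "qEHT_coeff q \<sigma>1 \<tau>0" "qEHT_coeff q \<sigma>0 0"]
      assms by blast
  moreover have "qEHT_op q [:\<sigma>0, \<sigma>1, \<sigma>2:] [:\<tau>0, \<tau>1:] P = smult (qEHT_coeff q \<sigma>2 \<tau>1 n) P"
    by (rule poly_eqI) (simp add: coeff_qEHT_op eigen)
  ultimately show ?thesis by blast
qed

lemma qEHT_coeff_eq_lam: "qEHT_coeff q (s / 2) t1 m = - lam q t1 s m"
  by (simp add: qEHT_coeff_def lam_def algebra_simps)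

lemma qEHT_coeff_closed_form:
  assumes "0 < q" "q < 1" "(1 - 1 / q) * v = - u"
  shows "qEHT_coeff q u v m = u * q\<^sup>2 / (1 - q)\<^sup>2 * (1 / q ^ m - 1)"
proof (cases m)
  case 0
  then show ?thesis by (simp add: qEHT_coeff_def)
next
  case (Suc j)
  define r where "r = q ^ j"
  have r: "0 < r" using assms by (simp add: r_def)
  have v: "v = u * q / (1 - q)" using assms by (simp add: field_simps)
  have "int m - 1 = int j" using Suc by simp
  then have "qEHT_coeff q u v m = (1 - q * r) / (1 - q) * (u * ((1 - 1 / r) / (1 - 1 / q)) + v)"
    by (simp add: qEHT_coeff_def Suc r_def power_divide)
  also have "u * ((1 - 1 / r) / (1 - 1 / q)) + v = u * q / ((1 - q) * r)"
    unfolding v using assms r by (simp add: field_simps)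
  also have "(1 - q * r) / (1 - q) * (u * q / ((1 - q) * r)) = u * q\<^sup>2 / (1 - q)\<^sup>2 * (1 / (q * r) - 1)"
  proof -
    have "q \<noteq> 0" "1 - q \<noteq> 0" "r \<noteq> 0" using assms r by auto
    then show ?thesis by (simp add: divide_simps power2_eq_square)
  qed
  finally show ?thesis by (simp add: Suc r_def)
qed

section \<open>Jackson integrals along the two lattices\<close>

lemma summable_power_mult_convergent:
  fixes q :: real
  assumes "\<bar>q\<bar> < 1" "X \<longlonglongrightarrow> L"
  shows "summable (\<lambda>j. q ^ j * X j)"
proof -
  have "Bseq X" using assms(2) by (rule convergent_imp_Bseq[OF convergentI])
  then obtain K where K: "\<And>j. norm (X j) \<le> K" using BseqE by metis
  have "summable (\<lambda>j. K * \<bar>q\<bar> ^ j)"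
    using assms(1) by (intro summable_mult summable_geometric) simp
  moreover have "norm (q ^ j * X j) \<le> K * \<bar>q\<bar> ^ j" for j
    using K[of j] by (simp add: abs_mult power_abs mult_right_mono mult.commute)
  ultimately show ?thesis by (rule summable_comparison_test'[where N = 0])
qed

lemma qint_cmult:
  assumes "summable (\<lambda>j. q ^ j * F (q ^ j * b))" "summable (\<lambda>j. q ^ j * F (q ^ j * a))"
  shows "qint q a b (\<lambda>x. c * F x) = c * qint q a b F"
proof -
  have "(\<Sum>j. q ^ j * (c * F (q ^ j * y))) = c * (\<Sum>j. q ^ j * F (q ^ j * y))"
    if "summable (\<lambda>j. q ^ j * F (q ^ j * y))" for y
    using suminf_mult[OF that, of c] by (simp add: algebra_simps)
  then show ?thesis
    unfolding qint_def using assms by (simp add: algebra_simps)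
qed

lemma qint_pos:
  fixes q a b :: real
  assumes "0 < q" "q < 1" "a < 0" "0 < b"
    and "summable (\<lambda>j. q ^ j * F (q ^ j * b))" "summable (\<lambda>j. q ^ j * F (q ^ j * a))"
    and "\<And>j. 0 \<le> F (q ^ j * a)" "\<And>j. 0 \<le> F (q ^ j * b)" "0 < F (q ^ i * b)"
  shows "0 < qint q a b F"
proof -
  have "0 < q ^ i * F (q ^ i * b)" using assms by simp
  then have "0 < (\<Sum>j. q ^ j * F (q ^ j * b))"
    using assms by (intro suminf_pos2[where i = i]) auto
  moreover have "0 \<le> (\<Sum>j. q ^ j * F (q ^ j * a))"
    using assms by (intro suminf_nonneg) auto
  ultimately show ?thesis
    unfolding qint_def using assms by (intro add_pos_nonneg mult_pos_pos mult_nonneg_nonneg) auto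
qed

section \<open>The weight and the symmetry of the operator\<close>

locale qEHT_interval =
  fixes q s a b t0 t1 :: real
  assumes q_pos: "0 < q" and q_less_1: "q < 1" and s_nonzero: "s \<noteq> 0"
    and a_neg: "a < 0" and b_pos: "0 < b"
    and t1_rel: "(1 - 1 / q) * t1 = - (1/2) * s"
    and t0_rel: "(1 - 1 / q) * t0 = (1/2) * s * (a + b)"
begin

definition sigma :: "real poly" where "sigma = [: s/2 * a * b, - (s/2) * (a + b), s/2 :]"

definition tau :: "real poly" where "tau = [: t0, t1 :]"

abbreviation L :: "real poly \<Rightarrow> real poly" where "L \<equiv> qEHT_op q sigma tau"

definition rho :: "real \<Rightarrow> real" where
  "rho x = qpoch_inf (q * x / a) q * qpoch_inf (q * x / b) q"

lemma poly_sigma: "poly sigma x = (1/2) * s * (x - a) * (x - b)"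
  by (simp add: sigma_def algebra_simps)

lemma poly_tau: "poly tau x = t1 * x + t0"
  by (simp add: tau_def)

lemma t1_eq: "t1 = s * q / (2 * (1 - q))"
  using t1_rel q_pos q_less_1 by (simp add: field_simps)

lemma t0_eq: "t0 = - (s/2) * (a + b) * q / (1 - q)"
  using t0_rel q_pos q_less_1 by (simp add: field_simps)

lemma lam_inj:
  assumes "lam q t1 s k = lam q t1 s n"
  shows "k = n"
proof -
  have "(1 - 1 / q) * t1 = - (s/2)" using t1_rel by simp
  moreover have "qEHT_coeff q (s/2) t1 k = qEHT_coeff q (s/2) t1 n"
    using assms by (simp add: qEHT_coeff_eq_lam)
  ultimately have "1 / q ^ k = 1 / q ^ n"
    using s_nonzero q_pos q_less_1 by (simp add: qEHT_coeff_closed_form)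
  then show ?thesis
    using q_pos q_less_1 by (simp add: power_inject_exp')
qed

lemma eigenpoly_exists: "\<exists>P. degree P = n \<and> lead_coeff P = 1 \<and> L P = smult (- lam q t1 s n) P"
  using qEHT_op_eigenpoly_exists[of n q "s/2" t1] lam_inj
  unfolding sigma_def tau_def qEHT_coeff_eq_lam by fastforce

lemma rho_rec: "rho (x / q) = (1 - x / a) * (1 - x / b) * rho x"
proof -
  have x: "q * (x / q) / a = x / a" "q * (x / q) / b = x / b" using q_pos by auto
  have "rho (x / q) = qpoch_inf (x / a) q * qpoch_inf (x / b) q"
    unfolding rho_def x ..
  also have "\<dots> = (1 - x / a) * qpoch_inf (x / a * q) q * ((1 - x / b) * qpoch_inf (x / b * q) q)"
    by (simp only: qpoch_inf_rec[OF q_pos q_less_1, of "x / a"] qpoch_inf_rec[OF q_pos q_less_1, of "x / b"])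
  also have "\<dots> = (1 - x / a) * (1 - x / b) * rho x"
    by (simp add: rho_def mult_ac)
  finally show ?thesis .
qed

lemma rho_endpoints: "rho (a / q) = 0" "rho (b / q) = 0"
  using rho_rec[of a] rho_rec[of b] a_neg b_pos by auto

lemma rho_lattice_pos:
  assumes "y \<in> {a, b}"
  shows "0 < rho (q ^ j * y)"
proof -
  have small: "q * q ^ j < 1" "q * q ^ j * a < 0" "0 < q * q ^ j * b"
    using power_Suc_less_one[OF q_pos q_less_1] q_pos a_neg b_pos by (simp_all add: mult_pos_neg)
  from assms consider "y = a" | "y = b" by auto
  then have "q * (q ^ j * y) / a < 1 \<and> q * (q ^ j * y) / b < 1"
  proof cases
    case 1
    then show ?thesis using small a_neg b_pos by (simp add: divide_neg_pos mult.assoc)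
  next
    case 2
    then show ?thesis using small a_neg b_pos by (simp add: divide_pos_neg mult.assoc)
  qed
  then show ?thesis
    unfolding rho_def by (intro mult_pos_pos qpoch_inf_pos[OF q_pos q_less_1]) auto
qed

lemma rho_lattice_tendsto: "(\<lambda>j. rho (q ^ j * y)) \<longlonglongrightarrow> rho 0"
proof -
  have "(\<lambda>j. qpoch_inf (q * y / a * q ^ j) q * qpoch_inf (q * y / b * q ^ j) q) \<longlonglongrightarrow> 1 * 1"
    by (intro tendsto_mult qpoch_inf_tail_tendsto q_pos q_less_1)
  then show ?thesis
    unfolding rho_def by (simp add: mult_ac)
qed

lemma poly_L:
  "poly (L f) x = (1/2) * s * (x - a) * (x - b) * poly (qdiff_poly (1 / q) (qdiff_poly q f)) x
                  + (t1 * x + t0) * poly (qdiff_poly q f) x"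
  by (simp add: qEHT_op_def poly_sigma poly_tau)

lemma L_symmetric_form:
  assumes "x \<noteq> 0"
  shows "x * rho x * poly (L f) x
           = q * s * a * b / 2 / ((1 - q)\<^sup>2 * x)
             * (rho x * (poly f (q * x) - poly f x) - q * rho (x / q) * (poly f x - poly f (x / q)))"
proof -
  have q: "q \<noteq> 0" "q \<noteq> 1" "1 / q \<noteq> 1" "1 - q \<noteq> 0" using q_pos q_less_1 by auto
  have x: "x / q \<noteq> 0" "q * (x / q) = x" "1 / q * x = x / q" using assms q by auto
  define F0 Fp Fm R where "F0 = poly f x" "Fp = poly f (q * x)" "Fm = poly f (x / q)" "R = rho x"
  have D: "poly (qdiff_poly q f) x = (F0 - Fp) / ((1 - q) * x)"
    unfolding F0_Fp_Fm_R_def by (rule poly_qdiff_poly[OF q(2) assms])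
  have Dm: "poly (qdiff_poly q f) (x / q) = (Fm - F0) / ((1 - q) * (x / q))"
    unfolding F0_Fp_Fm_R_def using poly_qdiff_poly[OF q(2) x(1), of f] unfolding x(2) .
  have DD: "poly (qdiff_poly (1 / q) (qdiff_poly q f)) x
              = (poly (qdiff_poly q f) x - poly (qdiff_poly q f) (x / q)) / ((1 - 1 / q) * x)"
    using poly_qdiff_poly[OF q(3) assms, of "qdiff_poly q f"] unfolding x(3) .
  have e: "1 - 1 / q = - (1 - q) / q" using q by (simp add: field_simps)
  txt \<open>Writing \<open>q = 1 - d\<close> stops \<open>field_simps\<close> from expanding \<open>1 - q\<close> inside denominators.\<close>
  define d where "d = 1 - q"
  have qd: "q = 1 - d" and d: "d \<noteq> 0" "1 - d \<noteq> 0" using q by (auto simp: d_def)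
  show ?thesis
    unfolding poly_L DD D Dm rho_rec F0_Fp_Fm_R_def[symmetric] e unfolding t1_eq t0_eq
    unfolding d_def[symmetric] unfolding qd
    using d assms a_neg b_pos by (simp add: field_simps power2_eq_square)
qed

text \<open>The factor \<open>q s a b / 2\<close> is the constant \<open>\<sigma>\<^sub>2\<close>.\<close>
definition wronskian :: "real poly \<Rightarrow> real poly \<Rightarrow> real \<Rightarrow> real" where
  "wronskian f g y = - q * s * a * b / 2 * rho y / (1 - q)
     * (poly g y * poly (qdiff_poly q f) y - poly f y * poly (qdiff_poly q g) y)"

lemma lagrange_identity:
  assumes "x \<noteq> 0"
  shows "x * rho x * (poly (L f) x * poly g x - poly f x * poly (L g) x)
           = wronskian f g x - wronskian f g (x / q)"
proof -
  have q: "q \<noteq> 0" "q \<noteq> 1" using q_pos q_less_1 by auto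
  have x: "x / q \<noteq> 0" "q * (x / q) = x" using assms q by auto
  have D: "poly (qdiff_poly q h) x = (poly h x - poly h (q * x)) / ((1 - q) * x)" for h
    by (rule poly_qdiff_poly[OF q(2) assms])
  have Dm: "poly (qdiff_poly q h) (x / q) = (poly h (x / q) - poly h x) / ((1 - q) * (x / q))" for h
    using poly_qdiff_poly[OF q(2) x(1), of h] unfolding x(2) .
  have "x * rho x * (poly (L f) x * poly g x - poly f x * poly (L g) x)
          = poly g x * (x * rho x * poly (L f) x) - poly f x * (x * rho x * poly (L g) x)"
    by (simp add: algebra_simps)
  also have "\<dots> = wronskian f g x - wronskian f g (x / q)"
  proof -
    define d where "d = 1 - q"
    have qd: "q = 1 - d" and d: "d \<noteq> 0" "1 - d \<noteq> 0" using q by (auto simp: d_def)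
    show ?thesis
      unfolding L_symmetric_form[OF assms] wronskian_def D Dm
      unfolding d_def[symmetric] unfolding qd
      using d assms by (simp add: field_simps power2_eq_square)
  qed
  finally show ?thesis .
qed

lemma lattice_tendsto_zero: "(\<lambda>j. q ^ j * y) \<longlonglongrightarrow> 0"
  using tendsto_mult_left_zero[OF LIMSEQ_power_zero[of q]] q_pos q_less_1 by simp

lemma lattice_summable: "summable (\<lambda>j. q ^ j * (poly f (q ^ j * y) * poly g (q ^ j * y) * rho (q ^ j * y)))"
  using q_pos q_less_1
  by (intro summable_power_mult_convergent[where L = "poly f 0 * poly g 0 * rho 0"] tendsto_intros
        lattice_tendsto_zero rho_lattice_tendsto) auto

text \<open>The Jackson sum along either lattice telescopes: the Wronskian vanishes at the first
  point \<open>y/q\<close> outside the lattice, where \<open>\<rho>\<close> has a zero, and tends to its value at \<open>0\<close>.\<close>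
lemma lattice_sums_wronskian:
  assumes "y \<in> {a, b}"
  shows "(\<lambda>j. q ^ j * y * rho (q ^ j * y)
            * (poly (L f) (q ^ j * y) * poly g (q ^ j * y) - poly f (q ^ j * y) * poly (L g) (q ^ j * y)))
         sums wronskian f g 0"
proof -
  define V where "V j = wronskian f g (q ^ j * y / q)" for j
  have "y \<noteq> 0" using assms a_neg b_pos by auto
  then have "q ^ j * y * rho (q ^ j * y)
               * (poly (L f) (q ^ j * y) * poly g (q ^ j * y) - poly f (q ^ j * y) * poly (L g) (q ^ j * y))
             = V (Suc j) - V j" for j
    using q_pos by (simp add: V_def lagrange_identity)
  moreover have "V 0 = 0"
    using assms rho_endpoints by (auto simp: V_def wronskian_def)
  moreover have "V \<longlonglongrightarrow> wronskian f g 0"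
  proof (rule LIMSEQ_imp_Suc)
    have "(\<lambda>j. wronskian f g (q ^ j * y)) \<longlonglongrightarrow> wronskian f g 0"
      unfolding wronskian_def
      by (intro tendsto_intros lattice_tendsto_zero rho_lattice_tendsto) (use q_less_1 in simp)
    then show "(\<lambda>j. V (Suc j)) \<longlonglongrightarrow> wronskian f g 0"
      using q_pos by (simp add: V_def)
  qed
  ultimately show ?thesis
    unfolding sums_def by (simp add: sum_lessThan_telescope)
qed

lemma qint_L_symmetric:
  "qint q a b (\<lambda>x. poly (L f) x * poly g x * rho x) = qint q a b (\<lambda>x. poly f x * poly (L g) x * rho x)"
proof -
  have lattice: "y * ((\<Sum>j. q ^ j * (poly (L f) (q ^ j * y) * poly g (q ^ j * y) * rho (q ^ j * y)))
                    - (\<Sum>j. q ^ j * (poly f (q ^ j * y) * poly (L g) (q ^ j * y) * rho (q ^ j * y))))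
                 = wronskian f g 0"
    if "y \<in> {a, b}" for y
  proof -
    note s1 = lattice_summable[where f = "L f" and g = g and y = y]
      and s2 = lattice_summable[where f = f and g = "L g" and y = y]
    have "y * ((\<Sum>j. q ^ j * (poly (L f) (q ^ j * y) * poly g (q ^ j * y) * rho (q ^ j * y)))
                - (\<Sum>j. q ^ j * (poly f (q ^ j * y) * poly (L g) (q ^ j * y) * rho (q ^ j * y))))
          = (\<Sum>j. y * (q ^ j * (poly (L f) (q ^ j * y) * poly g (q ^ j * y) * rho (q ^ j * y))
                      - q ^ j * (poly f (q ^ j * y) * poly (L g) (q ^ j * y) * rho (q ^ j * y))))"
      unfolding suminf_diff[OF s1 s2] by (rule suminf_mult[symmetric]) (intro summable_diff s1 s2)
    also have "\<dots> = wronskian f g 0"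
      using sums_unique[OF lattice_sums_wronskian[OF that, of f g]] by (simp add: algebra_simps)
    finally show ?thesis .
  qed
  have "qint q a b (\<lambda>x. poly (L f) x * poly g x * rho x) - qint q a b (\<lambda>x. poly f x * poly (L g) x * rho x)
     = (1 - q) * (b * ((\<Sum>j. q ^ j * (poly (L f) (q ^ j * b) * poly g (q ^ j * b) * rho (q ^ j * b)))
                     - (\<Sum>j. q ^ j * (poly f (q ^ j * b) * poly (L g) (q ^ j * b) * rho (q ^ j * b)))))
       - (1 - q) * (a * ((\<Sum>j. q ^ j * (poly (L f) (q ^ j * a) * poly g (q ^ j * a) * rho (q ^ j * a)))
                     - (\<Sum>j. q ^ j * (poly f (q ^ j * a) * poly (L g) (q ^ j * a) * rho (q ^ j * a)))))"
    unfolding qint_def by (simp add: algebra_simps)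
  also have "\<dots> = 0" using lattice[of a] lattice[of b] by simp
  finally show ?thesis by simp
qed

lemma qint_eigenpolys_orthogonal:
  assumes "L f = smult \<alpha> f" "L g = smult \<beta> g" "\<alpha> \<noteq> \<beta>"
  shows "qint q a b (\<lambda>x. poly f x * poly g x * rho x) = 0"
proof -
  define I where "I = qint q a b (\<lambda>x. poly f x * poly g x * rho x)"
  note cmult = qint_cmult[where a = a and b = b,
      OF lattice_summable[where f = f and g = g] lattice_summable[where f = f and g = g]]
  have "\<alpha> * I = qint q a b (\<lambda>x. poly (L f) x * poly g x * rho x)"
    using assms(1) cmult[of \<alpha>] by (simp add: I_def mult_ac)
  also have "\<dots> = qint q a b (\<lambda>x. poly f x * poly (L g) x * rho x)"
    by (rule qint_L_symmetric)
  also have "\<dots> = \<beta> * I"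
    using assms(2) cmult[of \<beta>] by (simp add: I_def mult_ac)
  finally show ?thesis
    using assms(3) by (simp add: I_def)
qed

text \<open>A nonzero polynomial cannot vanish on the infinite lattice \<open>{q\<^sup>j b}\<close>, and \<open>\<rho> > 0\<close> there.\<close>
lemma qint_square_pos:
  assumes "f \<noteq> 0"
  shows "0 < qint q a b (\<lambda>x. poly f x * poly f x * rho x)"
proof -
  obtain i where i: "poly f (q ^ i * b) \<noteq> 0"
  proof (rule ccontr)
    assume "\<not> thesis"
    then have "range (\<lambda>j. q ^ j * b) \<subseteq> {x. poly f x = 0}" using that by auto
    then have "finite (range (\<lambda>j::nat. q ^ j * b))"
      using poly_roots_finite[OF assms] by (rule finite_subset)
    moreover have "inj (\<lambda>j::nat. q ^ j * b)"
      using b_pos q_pos q_less_1 by (intro injI) (simp add: power_inject_exp')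
    ultimately show False
      using finite_imageD by fastforce
  qed
  have "0 \<le> poly f (q ^ j * y) * poly f (q ^ j * y) * rho (q ^ j * y)" if "y \<in> {a, b}" for j y
    by (intro mult_nonneg_nonneg zero_le_square less_imp_le rho_lattice_pos that)
  moreover have "0 < poly f (q ^ i * b) * poly f (q ^ i * b) * rho (q ^ i * b)"
    using i by (intro mult_pos_pos[OF _ rho_lattice_pos]) (simp_all flip: power2_eq_square)
  ultimately show ?thesis
    using q_pos q_less_1 a_neg b_pos lattice_summable[where f = f and g = f]
    by (intro qint_pos[where i = i]) auto
qed

end

theorem theorem5p12:
  fixes q s a b t0 t1 :: real
  assumes "0 < q" "q < 1"
    and "s \<noteq> 0"
    and "a < 0" "0 < b"
    and "(1 - 1 / q) * t1 = - (1/2) * s"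
    and "(1 - 1 / q) * t0 = (1/2) * s * (a + b)"
  defines "\<sigma>1 \<equiv> (\<lambda>x::real. (1/2) * s * (x - a) * (x - b))"
    and "\<tau> \<equiv> (\<lambda>x::real. t1 * x + t0)"
    and "\<rho> \<equiv> (\<lambda>x::real. qpoch_inf (q * x / a) q * qpoch_inf (q * x / b) q)"
  shows "\<exists>(P :: nat \<Rightarrow> real poly) (d2 :: nat \<Rightarrow> real).
           (\<forall>n. degree (P n) = n
                 \<and> qEHT q \<sigma>1 \<tau> (lam q t1 s n) (poly (P n))
                 \<and> d2 n \<noteq> 0)
         \<and> (\<forall>m n. qint q a b (\<lambda>x. poly (P n) x * poly (P m) x * \<rho> x)
                    = (if m = n then d2 n else 0))"
proof -
  interpret qEHT_interval q s a b t0 t1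
    using assms(1-7) by unfold_locales
  have as_locale: "\<sigma>1 = poly sigma" "\<tau> = poly tau" "\<rho> = rho"
    by (simp_all add: fun_eq_iff \<sigma>1_def \<tau>_def \<rho>_def poly_sigma poly_tau rho_def)
  obtain P where P: "\<And>n. degree (P n) = n" "\<And>n. lead_coeff (P n) = 1"
    "\<And>n. L (P n) = smult (- lam q t1 s n) (P n)"
    using eigenpoly_exists by metis
  define d2 where "d2 n = qint q a b (\<lambda>x. poly (P n) x * poly (P n) x * rho x)" for n
  have "qEHT q \<sigma>1 \<tau> (lam q t1 s n) (poly (P n))" for n
    unfolding as_locale using P(3) assms(2) by (intro qEHT_of_qEHT_op_eigen) auto
  moreover have "d2 n \<noteq> 0" for n
  proof -
    have "P n \<noteq> 0" using P(2)[of n] by auto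
    then show ?thesis using qint_square_pos[of "P n"] by (simp add: d2_def)
  qed
  moreover have "qint q a b (\<lambda>x. poly (P n) x * poly (P m) x * rho x) = 0" if "m \<noteq> n" for m n
    by (rule qint_eigenpolys_orthogonal[OF P(3) P(3)]) (use lam_inj that in fastforce)
  ultimately show ?thesis
    unfolding as_locale using P(1) by (intro exI[of _ P] exI[of _ d2]) (auto simp: d2_def)
qed

end
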